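(* For every $\bar x\in\mathcal{X}$, $$\operatorname{proj}_\theta(\widehat{\mathrm{SRI}}(\bar x))=\Big\{\theta\in\mathbb{R}^{V_+}_{\ge0}:\sum_{v\in V_+:w_v>0}\phi_v(\alpha,\beta)\theta_v\ge\sum_{\xi\in[N]}\sum_{\emptyset\ne S\subseteq V_+}\alpha^\xi_S\bar x(E(S))+\nu(\alpha,\beta)\ \ \forall(\alpha,\beta)\in\mathcal{A}\Big\}.$$ Consequently, $\mathcal{P}$ equals the set of $(x,\theta)\in\mathcal{X}\times\mathbb{R}^{V_+}_{\ge0}$ satisfying $\sum_{v:w_v>0}\phi_v(\alpha,\beta)\theta_v\ge\sum_\xi\sum_S\alpha^\xi_Sx(E(S))+\nu(\alpha,\beta)$ for all $(\alpha,\beta)\in\mathcal{A}$.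
   Context: $G=(V,E)$ complete undirected graph, $V=\{0\}\cup V_+$ ($V_+$ customers); capacity $C>0$; scenarios $\xi\in[N]$ with demands $d^\xi\in\mathbb{Q}^{V_+}_{\ge0}$ ($d^\xi(v)\le C$) and probabilities $p_\xi\ge0$, $\sum_\xi p_\xi=1$. $f(S)=\sum_{i\in S}f(i)$; $k_\xi(S)=\lceil d^\xi(S)/C\rceil$; $\bar d=\sum_\xi p_\xi d^\xi$; $E(S)$: edges with both ends in $S$; $\delta(S)$: edges with exactly one end in $S$. $\mathcal{X}$ is one of $\mathcal{X}_{\mathrm{sub}}=\{x\in[0,2]^E: x(\delta(v))=2\ \forall v\in V_+,\ x(E(S))\le|S|-1\ \forall\emptyset\ne S\subseteq V_+\}$ or $\mathcal{X}_{\mathrm{cvrp}}=\mathcal{X}_{\mathrm{sub}}\cap\{x:x(\delta(0))=2k,\ x(E(S))\le|S|-\lceil\bar d(S)/C\rceil\}$. Fixed $w\in\mathbb{Q}^{V_+}_{\ge0}$, $b\in\mathbb{Z}^{V_+}_{\ge0}$; $y\in\mathbb{R}^{[N]\times V_+}$ has entries $y^\xi_v$; $[\mathbf 0,b]^N=\{y:0\le y^\xi_v\le b_v\}$. For $\bar x\in\mathcal{X}$, $\widehat{\mathrm{SRI}}(\bar x)$ is the set of $(\theta,y)\in\mathbb{R}^{V_+}_{\ge0}\times[\mathbf 0,b]^N$ with $y^\xi(S)\ge k_\xi(S)+\bar x(E(S))-|S|$ for all $\emptyset\ne S\subseteq V_+$, $\xi\in[N]$, and $\theta_v\ge\sum_\xi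 p_\xi w_vy^\xi_v$ for all $v$; $\operatorname{proj}_\theta$ is projection onto $\theta$; $\mathcal{P}=\{(x,\theta):x\in\mathcal{X},\theta\in\operatorname{proj}_\theta(\widehat{\mathrm{SRI}}(x))\}$. Multipliers $\alpha=(\alpha^\xi_S)_{\xi,\emptyset\ne S\subseteq V_+}$, $\beta=(\beta^\xi_v)_{\xi,v}$. $\nu(\alpha,\beta)=\sum_\xi\sum_S\alpha^\xi_S(k_\xi(S)-|S|)+\sum_\xi\sum_v\beta^\xi_vb_v$. For $w_v>0$, $\phi_v(\alpha,\beta)=\big(\max_{\xi}\frac{\beta^\xi_v+\sum_{S\ni v}\alpha^\xi_S}{p_\xi w_v}\big)^+$ with $(a)^+=\max\{a,0\}$. $\mathcal{A}$ is the set of $(\alpha,\beta)$ with $\alpha\ge0$, $\beta\le0$, and $\beta^\xi_v+\sum_{S\ni v}\alpha^\xi_S\le0$ for all $\xi$ and all $v$ with $w_v=0$. *)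

theory Defs
  imports Complex_Main
begin

text \<open>Customers V+ are the elements of a finite type 'c; the vertex set is
  'c option, with None the depot 0 and Some v the customer v. Scenarios [N] are the
  elements of a finite (hence nonempty) type 's. Edges of the complete graph are
  two-element sets of vertices; a vector in R^E is a function on vertex sets which is
  0 outside E. A vector in R^{V+} is a function 'c => real, y in R^{[N] x V+} is
  a function 's => 'c => real with y xi v = y^xi_v.\<close>

definition edges :: "'c option set set" where
  "edges = {e. \<exists>u v. u \<noteq> v \<and> e = {u, v}}"

definition xE :: "('c option set \<Rightarrow> real) \<Rightarrow> 'c set \<Rightarrow> real" where
  "xE x S = (\<Sum>e\<in>{e\<in>edges. e \<subseteq> Some ` S}. x e)"

definition xdelta :: "('c option set \<Rightarrow> real) \<Rightarrow> 'c option set \<Rightarrow> real" where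
  "xdelta x T = (\<Sum>e\<in>{e\<in>edges. card (e \<inter> T) = 1}. x e)"

definition Xsub :: "('c::finite option set \<Rightarrow> real) set" where
  "Xsub = {x. (\<forall>e. e \<notin> edges \<longrightarrow> x e = 0)
             \<and> (\<forall>e\<in>edges. 0 \<le> x e \<and> x e \<le> 2)
             \<and> (\<forall>v. xdelta x {Some v} = 2)
             \<and> (\<forall>S. S \<noteq> {} \<longrightarrow> xE x S \<le> real (card S) - 1)}"

definition dbar :: "('s::finite \<Rightarrow> real) \<Rightarrow> ('s \<Rightarrow> 'c \<Rightarrow> real) \<Rightarrow> 'c set \<Rightarrow> real" where
  "dbar p d S = (\<Sum>\<xi>\<in>UNIV. p \<xi> * (\<Sum>v\<in>S. d \<xi> v))"

definition Xcvrp :: "('s::finite \<Rightarrow> real) \<Rightarrow> ('s \<Rightarrow> 'c::finite \<Rightarrow> real) \<Rightarrow> real \<Rightarrow> nat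
                      \<Rightarrow> ('c option set \<Rightarrow> real) set" where
  "Xcvrp p d C k = Xsub \<inter> {x. xdelta x {None} = 2 * real k
       \<and> (\<forall>S. S \<noteq> {} \<longrightarrow> xE x S \<le> real (card S) - of_int \<lceil>dbar p d S / C\<rceil>)}"

definition kk :: "('s \<Rightarrow> 'c \<Rightarrow> real) \<Rightarrow> real \<Rightarrow> 's \<Rightarrow> 'c set \<Rightarrow> int" where
  "kk d C \<xi> S = \<lceil>(\<Sum>v\<in>S. d \<xi> v) / C\<rceil>"

definition SRI :: "('s::finite \<Rightarrow> real) \<Rightarrow> ('s \<Rightarrow> 'c::finite \<Rightarrow> real) \<Rightarrow> real
                   \<Rightarrow> ('c \<Rightarrow> real) \<Rightarrow> ('c \<Rightarrow> nat) \<Rightarrow> ('c option set \<Rightarrow> real)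
                   \<Rightarrow> (('c \<Rightarrow> real) \<times> ('s \<Rightarrow> 'c \<Rightarrow> real)) set" where
  "SRI p d C w b xbar = {(\<theta>, y).
      (\<forall>v. 0 \<le> \<theta> v)
    \<and> (\<forall>\<xi> v. 0 \<le> y \<xi> v \<and> y \<xi> v \<le> real (b v))
    \<and> (\<forall>\<xi> S. S \<noteq> {} \<longrightarrow>
          (\<Sum>v\<in>S. y \<xi> v) \<ge> of_int (kk d C \<xi> S) + xE xbar S - real (card S))
    \<and> (\<forall>v. \<theta> v \<ge> (\<Sum>\<xi>\<in>UNIV. p \<xi> * w v * y \<xi> v))}"

definition proj_theta :: "(('c \<Rightarrow> real) \<times> 'y) set \<Rightarrow> ('c \<Rightarrow> real) set" where
  "proj_theta A = fst ` A"

definition Pset :: "('c option set \<Rightarrow> real) set \<Rightarrow> ('s::finite \<Rightarrow> real)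
                    \<Rightarrow> ('s \<Rightarrow> 'c::finite \<Rightarrow> real) \<Rightarrow> real \<Rightarrow> ('c \<Rightarrow> real) \<Rightarrow> ('c \<Rightarrow> nat)
                    \<Rightarrow> (('c option set \<Rightarrow> real) \<times> ('c \<Rightarrow> real)) set" where
  "Pset X p d C w b = {(x, \<theta>). x \<in> X \<and> \<theta> \<in> proj_theta (SRI p d C w b x)}"

definition nu :: "('s::finite \<Rightarrow> 'c::finite \<Rightarrow> real) \<Rightarrow> real \<Rightarrow> ('c \<Rightarrow> nat)
                  \<Rightarrow> ('s \<Rightarrow> 'c set \<Rightarrow> real) \<Rightarrow> ('s \<Rightarrow> 'c \<Rightarrow> real) \<Rightarrow> real" where
  "nu d C b \<alpha> \<beta> =
     (\<Sum>\<xi>\<in>UNIV. \<Sum>S\<in>{S. S \<noteq> {}}. \<alpha> \<xi> S * (of_int (kk d C \<xi> S) - real (card S)))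
   + (\<Sum>\<xi>\<in>UNIV. \<Sum>v\<in>UNIV. \<beta> \<xi> v * real (b v))"

text \<open>phi_v(alpha, beta), used only for w_v > 0\<close>
definition phi :: "('s::finite \<Rightarrow> real) \<Rightarrow> ('c::finite \<Rightarrow> real) \<Rightarrow> 'c
                   \<Rightarrow> ('s \<Rightarrow> 'c set \<Rightarrow> real) \<Rightarrow> ('s \<Rightarrow> 'c \<Rightarrow> real) \<Rightarrow> real" where
  "phi p w v \<alpha> \<beta> = max 0 (Max ((\<lambda>\<xi>. (\<beta> \<xi> v + (\<Sum>S\<in>{S. v \<in> S}. \<alpha> \<xi> S)) / (p \<xi> * w v)) ` UNIV))"

definition Aset :: "('c::finite \<Rightarrow> real) \<Rightarrow> (('s \<Rightarrow> 'c set \<Rightarrow> real) \<times> ('s \<Rightarrow> 'c \<Rightarrow> real)) set" where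
  "Aset w = {(\<alpha>, \<beta>).
      (\<forall>\<xi> S. S \<noteq> {} \<longrightarrow> 0 \<le> \<alpha> \<xi> S)
    \<and> (\<forall>\<xi> v. \<beta> \<xi> v \<le> 0)
    \<and> (\<forall>\<xi> v. w v = 0 \<longrightarrow> \<beta> \<xi> v + (\<Sum>S\<in>{S. v \<in> S}. \<alpha> \<xi> S) \<le> 0)}"

definition cutset :: "('s::finite \<Rightarrow> real) \<Rightarrow> ('s \<Rightarrow> 'c::finite \<Rightarrow> real) \<Rightarrow> real
                      \<Rightarrow> ('c \<Rightarrow> real) \<Rightarrow> ('c \<Rightarrow> nat) \<Rightarrow> ('c option set \<Rightarrow> real)
                      \<Rightarrow> ('c \<Rightarrow> real) set" where
  "cutset p d C w b x = {\<theta>. (\<forall>v. 0 \<le> \<theta> v) \<and>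
     (\<forall>(\<alpha>, \<beta>) \<in> Aset w.
        (\<Sum>v\<in>{v. w v > 0}. phi p w v \<alpha> \<beta> * \<theta> v)
          \<ge> (\<Sum>\<xi>\<in>UNIV. \<Sum>S\<in>{S. S \<noteq> {}}. \<alpha> \<xi> S * xE x S) + nu d C b \<alpha> \<beta>)}"

end

theory Submission
  imports Defs "HOL-Analysis.Analysis"
begin

(* For fixed x and theta, the vectors y with (theta, y) in SRI(x) are the solutions of a finite
   linear system A y >= c. By Farkas' lemma it is solvable iff l c <= 0 for every l >= 0 with
   l A = 0. Such an l consists of multipliers (alpha, beta) for the rounded capacity and upper
   bound rows, gamma_v for the risk rows and slacks for y >= 0; the slacks are nonnegative iff
   (alpha, beta) lies in A and gamma_v >= phi_v(alpha, beta) whenever w_v > 0, so the weakest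
   condition, at gamma_v = phi_v(alpha, beta), is exactly the cut inequality for (alpha, beta).
   The argument works for every x and uses only p > 0 and w >= 0 of the hypotheses. *)

lemma convex_cone_hull_subset_nonneg_combinations:
  fixes u :: "'i::finite \<Rightarrow> 'a::real_vector"
  shows "convex_cone hull (range u) \<subseteq> {(\<Sum>i\<in>UNIV. l i *\<^sub>R u i) | l. \<forall>i. 0 \<le> l i}"
    (is "_ \<subseteq> ?K")
proof (rule hull_minimal)
  show "range u \<subseteq> ?K"
  proof (rule image_subsetI)
    fix k
    have "u k = (\<Sum>i\<in>UNIV. of_bool (i = k) *\<^sub>R u i)"
      by (simp add: of_bool_def if_distrib[of "\<lambda>t. t *\<^sub>R _"] cong: if_cong)
    then show "u k \<in> ?K" by fastforce
  qed
  show "convex_cone ?K"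
    unfolding convex_cone_iff
  proof (intro conjI ballI allI impI)
    show "0 \<in> ?K" by (auto intro!: exI[of _ "\<lambda>i. 0"])
  next
    fix x y assume "x \<in> ?K" "y \<in> ?K"
    then obtain l m where "x = (\<Sum>i\<in>UNIV. l i *\<^sub>R u i)" "\<forall>i. 0 \<le> l i"
      and "y = (\<Sum>i\<in>UNIV. m i *\<^sub>R u i)" "\<forall>i. 0 \<le> m i" by blast
    then show "x + y \<in> ?K"
      by (auto simp: scaleR_add_left sum.distrib intro!: exI[of _ "\<lambda>i. l i + m i"])
  next
    fix x and r :: real assume "x \<in> ?K" "0 \<le> r"
    then obtain l where "x = (\<Sum>i\<in>UNIV. l i *\<^sub>R u i)" "\<forall>i. 0 \<le> l i" by blast
    with \<open>0 \<le> r\<close> show "r *\<^sub>R x \<in> ?K"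
      by (auto simp: scaleR_sum_right intro!: exI[of _ "\<lambda>i. r * l i"])
  qed
qed

lemma separating_functional_finite_convex_cone:
  fixes u :: "'i::finite \<Rightarrow> 'a::euclidean_space"
  assumes "z \<notin> convex_cone hull (range u)"
  obtains a where "a \<bullet> z < 0" and "\<And>i. 0 \<le> a \<bullet> u i"
proof -
  let ?K = "convex_cone hull (range u)"
  obtain a s where sep: "a \<bullet> z < s" "\<forall>x\<in>?K. s < a \<bullet> x"
    using separating_hyperplane_closed_point[OF convex_convex_cone_hull
        closed_convex_cone_hull[OF finite_imageI[OF finite]] assms] by blast
  have s_neg: "s < 0" using sep(2) convex_cone_hull_contains_0 by fastforce
  have "0 \<le> a \<bullet> u i" for i
  proof (rule ccontr)
    assume neg: "\<not> 0 \<le> a \<bullet> u i"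
    have "(2 * s / (a \<bullet> u i)) *\<^sub>R u i \<in> ?K"
      using neg s_neg by (intro convex_cone_hull_mul hull_inc) (auto simp: divide_nonpos_neg)
    with sep(2) have "s < 2 * s" using neg by fastforce
    with s_neg show False by simp
  qed
  with sep(1) s_neg show ?thesis using that by force
qed

definition no_farkas_certificate :: "('i::finite \<Rightarrow> 'j::finite \<Rightarrow> real) \<Rightarrow> ('i \<Rightarrow> real) \<Rightarrow> bool" where
  "no_farkas_certificate A c \<longleftrightarrow>
     (\<forall>l. (\<forall>i. 0 \<le> l i) \<longrightarrow> (\<forall>j. (\<Sum>i\<in>UNIV. l i * A i j) = 0) \<longrightarrow> (\<Sum>i\<in>UNIV. l i * c i) \<le> 0)"

lemma farkas_lemma:
  fixes A :: "'i::finite \<Rightarrow> 'j::finite \<Rightarrow> real" and c :: "'i \<Rightarrow> real"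
  shows "(\<exists>y. \<forall>i. c i \<le> (\<Sum>j\<in>UNIV. A i j * y j)) \<longleftrightarrow> no_farkas_certificate A c"
  unfolding no_farkas_certificate_def
proof (intro iffI allI impI)
  fix l :: "'i \<Rightarrow> real"
  assume "\<exists>y. \<forall>i. c i \<le> (\<Sum>j\<in>UNIV. A i j * y j)" and l: "\<forall>i. 0 \<le> l i"
    and cols: "\<forall>j. (\<Sum>i\<in>UNIV. l i * A i j) = 0"
  then obtain y where y: "\<forall>i. c i \<le> (\<Sum>j\<in>UNIV. A i j * y j)" by blast
  have "(\<Sum>i\<in>UNIV. l i * c i) \<le> (\<Sum>i\<in>UNIV. l i * (\<Sum>j\<in>UNIV. A i j * y j))"
    using l y by (intro sum_mono mult_left_mono) auto
  also have "\<dots> = (\<Sum>j\<in>UNIV. (\<Sum>i\<in>UNIV. l i * A i j) * y j)"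
    by (simp add: sum_distrib_left sum_distrib_right mult_ac) (rule sum.swap)
  also have "\<dots> = 0" using cols by simp
  finally show "(\<Sum>i\<in>UNIV. l i * c i) \<le> 0" .
next
  assume cert: "\<forall>l. (\<forall>i. 0 \<le> l i) \<longrightarrow> (\<forall>j. (\<Sum>i\<in>UNIV. l i * A i j) = 0)
                   \<longrightarrow> (\<Sum>i\<in>UNIV. l i * c i) \<le> 0"
  define u :: "'i \<Rightarrow> (real^'j) \<times> real" where "u i = (vec_lambda (A i), c i)" for i
  let ?K = "convex_cone hull (range u)"
  have "(0, 1) \<notin> ?K"
  proof
    assume "(0, 1) \<in> ?K"
    then obtain l where l: "\<forall>i. 0 \<le> l i" and comb: "(0, 1) = (\<Sum>i\<in>UNIV. l i *\<^sub>R u i)"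
      using convex_cone_hull_subset_nonneg_combinations by blast
    have "(\<Sum>i\<in>UNIV. l i * A i j) = 0" for j
      using arg_cong[OF comb, of "\<lambda>z. fst z $ j"] by (simp add: u_def fst_sum sum_component)
    with cert l have "(\<Sum>i\<in>UNIV. l i * c i) \<le> 0" by blast
    moreover have "(\<Sum>i\<in>UNIV. l i * c i) = 1"
      using arg_cong[OF comb, of snd] by (simp add: u_def snd_sum)
    ultimately show False by simp
  qed
  then obtain a where a_neg: "a \<bullet> (0, 1) < 0" and u_nonneg: "\<And>i. 0 \<le> a \<bullet> u i"
    using separating_functional_finite_convex_cone by blast
  obtain h t where a: "a = (h, t)" by fastforce
  have t_neg: "t < 0" using a_neg by (simp add: a)
  have "c i \<le> (\<Sum>j\<in>UNIV. A i j * (h $ j / - t))" for i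
  proof -
    have "c i * - t \<le> h \<bullet> vec_lambda (A i)"
      using u_nonneg[of i] by (simp add: a u_def algebra_simps)
    moreover have "(\<Sum>j\<in>UNIV. A i j * (h $ j / - t)) = h \<bullet> vec_lambda (A i) / - t"
      by (simp add: inner_vec_def sum_divide_distrib mult.commute sum_negf)
    moreover have "0 < - t" using t_neg by simp
    ultimately show ?thesis by (simp only: pos_le_divide_eq)
  qed
  then show "\<exists>y. \<forall>i. c i \<le> (\<Sum>j\<in>UNIV. A i j * y j)"
    by (intro exI[of _ "\<lambda>j. h $ j / - t"]) blast
qed

lemma sum_UNIV_prod:
  "(\<Sum>j\<in>UNIV. g j) = (\<Sum>a\<in>UNIV. \<Sum>b\<in>UNIV. g (a, b))"
  by (simp add: sum.cartesian_product UNIV_Times_UNIV[symmetric] del: UNIV_Times_UNIV)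

(* Rows of the system A y >= c in the unknowns y (xi, v) describing the y with (theta, y) in SRI(x):
   y >= 0, -y >= -b, the rounded capacity inequalities, and -(sum p w y) >= -theta_v.
   The row Capacity xi {} is the trivial inequality 0 >= 0. *)
datatype ('s, 'c) sri_row = Lower 's 'c | Upper 's 'c | Capacity 's "'c set" | Risk 'c

lemma UNIV_sri_row:
  "UNIV = range (case_prod Lower) \<union> range (case_prod Upper) \<union> range (case_prod Capacity) \<union> range Risk"
    (is "_ = ?R")
proof (rule set_eqI)
  fix i
  show "i \<in> UNIV \<longleftrightarrow> i \<in> ?R"
    by (cases i) (simp_all add: image_iff)
qed

instance sri_row :: (finite, finite) finite
  by standard (simp add: UNIV_sri_row)

lemma all_sri_row:
  "(\<forall>i. P i) \<longleftrightarrow>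
     (\<forall>\<xi> v. P (Lower \<xi> v)) \<and> (\<forall>\<xi> v. P (Upper \<xi> v)) \<and> (\<forall>\<xi> S. P (Capacity \<xi> S)) \<and> (\<forall>v. P (Risk v))"
  by (metis sri_row.exhaust)

lemma sum_UNIV_sri_row:
  fixes f :: "('s::finite, 'c::finite) sri_row \<Rightarrow> 'a::comm_monoid_add"
  shows "(\<Sum>i\<in>UNIV. f i) =
    (\<Sum>\<xi>\<in>UNIV. \<Sum>v\<in>UNIV. f (Lower \<xi> v)) + (\<Sum>\<xi>\<in>UNIV. \<Sum>v\<in>UNIV. f (Upper \<xi> v))
    + (\<Sum>\<xi>\<in>UNIV. \<Sum>S\<in>UNIV. f (Capacity \<xi> S)) + (\<Sum>v\<in>UNIV. f (Risk v))"
proof -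
  have inj: "inj (case_prod Lower)" "inj (case_prod Upper)" "inj (case_prod Capacity)" "inj Risk"
    by (auto simp: inj_def)
  have disjoint:
    "(range (case_prod Lower) \<union> range (case_prod Upper) \<union> range (case_prod Capacity))
       \<inter> range Risk = {}"
    "(range (case_prod Lower) \<union> range (case_prod Upper)) \<inter> range (case_prod Capacity) = {}"
    "range (case_prod Lower) \<inter> range (case_prod Upper) = {}"
    by auto
  show ?thesis
    by (subst UNIV_sri_row)
      (simp add: sum.union_disjoint disjoint sum.reindex inj
        sum_UNIV_prod[of "\<lambda>j. f (case_prod _ j)"])
qed

fun sri_coeff :: "('s \<Rightarrow> real) \<Rightarrow> ('c \<Rightarrow> real) \<Rightarrow> ('s, 'c) sri_row \<Rightarrow> 's \<times> 'c \<Rightarrow> real" where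
  "sri_coeff p w (Lower \<xi> v) (\<xi>', v') = (if \<xi>' = \<xi> \<and> v' = v then 1 else 0)"
| "sri_coeff p w (Upper \<xi> v) (\<xi>', v') = (if \<xi>' = \<xi> \<and> v' = v then -1 else 0)"
| "sri_coeff p w (Capacity \<xi> S) (\<xi>', v') = (if \<xi>' = \<xi> \<and> v' \<in> S then 1 else 0)"
| "sri_coeff p w (Risk v) (\<xi>', v') = (if v' = v then - (p \<xi>' * w v) else 0)"

fun sri_rhs :: "('s \<Rightarrow> 'c \<Rightarrow> real) \<Rightarrow> real \<Rightarrow> ('c \<Rightarrow> nat) \<Rightarrow> ('c option set \<Rightarrow> real) \<Rightarrow> ('c \<Rightarrow> real)
                \<Rightarrow> ('s, 'c) sri_row \<Rightarrow> real" where
  "sri_rhs d C b x \<theta> (Lower \<xi> v) = 0"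
| "sri_rhs d C b x \<theta> (Upper \<xi> v) = - real (b v)"
| "sri_rhs d C b x \<theta> (Capacity \<xi> S) = of_int (kk d C \<xi> S) + xE x S - real (card S)"
| "sri_rhs d C b x \<theta> (Risk v) = - \<theta> v"

lemma sum_if_const: "(\<Sum>x\<in>A. if P then f x else 0) = (if P then sum f A else 0)"
  by simp

lemma sri_row_value:
  fixes y :: "'s::finite \<times> 'c::finite \<Rightarrow> real"
  shows "(\<Sum>j\<in>UNIV. sri_coeff p w (Lower \<xi> v) j * y j) = y (\<xi>, v)"
    and "(\<Sum>j\<in>UNIV. sri_coeff p w (Upper \<xi> v) j * y j) = - y (\<xi>, v)"
    and "(\<Sum>j\<in>UNIV. sri_coeff p w (Capacity \<xi> S) j * y j) = (\<Sum>v\<in>S. y (\<xi>, v))"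
    and "(\<Sum>j\<in>UNIV. sri_coeff p w (Risk v) j * y j) = - (\<Sum>\<xi>\<in>UNIV. p \<xi> * w v * y (\<xi>, v))"
  by (simp_all add: sum_UNIV_prod if_distrib[of "\<lambda>t. t * _"] if_if_eq_conj[symmetric] sum_if_const
      sum.If_cases sum_negf cong: if_cong)

lemma sri_column_sum:
  fixes l :: "('s::finite, 'c::finite) sri_row \<Rightarrow> real"
  shows "(\<Sum>i\<in>UNIV. l i * sri_coeff p w i (\<xi>, v)) =
     l (Lower \<xi> v) - l (Upper \<xi> v) + (\<Sum>S\<in>{S. v \<in> S}. l (Capacity \<xi> S)) - l (Risk v) * (p \<xi> * w v)"
  by (simp add: sum_UNIV_sri_row if_distrib[of "\<lambda>t. _ * t"] if_if_eq_conj[symmetric] sum_if_const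
      sum.If_cases cong: if_cong)

lemma kk_empty: "kk d C \<xi> {} = 0"
  by (simp add: kk_def)

lemma xE_empty: "xE x {} = 0"
proof -
  have "{e \<in> edges. e \<subseteq> Some ` {}} = {}"
    by (auto simp: edges_def)
  then show ?thesis
    unfolding xE_def by (metis sum.empty)
qed

lemma sri_rhs_combination:
  fixes l :: "('s::finite, 'c::finite) sri_row \<Rightarrow> real"
  shows "(\<Sum>i\<in>UNIV. l i * sri_rhs d C b x \<theta> i) =
     (\<Sum>\<xi>\<in>UNIV. \<Sum>S\<in>{S. S \<noteq> {}}. l (Capacity \<xi> S) * sri_rhs d C b x \<theta> (Capacity \<xi> S))
     - (\<Sum>\<xi>\<in>UNIV. \<Sum>v\<in>UNIV. l (Upper \<xi> v) * real (b v)) - (\<Sum>v\<in>UNIV. l (Risk v) * \<theta> v)"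
proof -
  have "(\<Sum>S\<in>UNIV. l (Capacity \<xi> S) * sri_rhs d C b x \<theta> (Capacity \<xi> S))
      = (\<Sum>S\<in>{S. S \<noteq> {}}. l (Capacity \<xi> S) * sri_rhs d C b x \<theta> (Capacity \<xi> S))" for \<xi>
    by (rule sum.mono_neutral_right) (auto simp: kk_empty xE_empty)
  then show ?thesis by (simp add: sum_UNIV_sri_row sum_negf)
qed

lemma cut_rhs_eq:
  "(\<Sum>\<xi>\<in>UNIV. \<Sum>S\<in>{S. S \<noteq> {}}. \<alpha> \<xi> S * xE x S) + nu d C b \<alpha> \<beta> =
   (\<Sum>\<xi>\<in>UNIV. \<Sum>S\<in>{S. S \<noteq> {}}. \<alpha> \<xi> S * sri_rhs d C b x \<theta> (Capacity \<xi> S))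
   + (\<Sum>\<xi>\<in>UNIV. \<Sum>v\<in>UNIV. \<beta> \<xi> v * real (b v))"
  by (simp add: nu_def algebra_simps sum.distrib[symmetric])

lemma SRI_iff_sri_system:
  "(\<theta>, y) \<in> SRI p d C w b x \<longleftrightarrow>
     (\<forall>v. 0 \<le> \<theta> v) \<and> (\<forall>i. sri_rhs d C b x \<theta> i \<le> (\<Sum>j\<in>UNIV. sri_coeff p w i j * case_prod y j))"
proof -
  have "sri_rhs d C b x \<theta> (Capacity \<xi> {}) = 0" for \<xi>
    by (simp add: kk_empty xE_empty)
  then have "(\<forall>\<xi> S. S \<noteq> {} \<longrightarrow> sri_rhs d C b x \<theta> (Capacity \<xi> S) \<le> (\<Sum>v\<in>S. y \<xi> v)) \<longleftrightarrow>
      (\<forall>\<xi> S. sri_rhs d C b x \<theta> (Capacity \<xi> S) \<le> (\<Sum>v\<in>S. y \<xi> v))"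
    by (metis order_refl sum.empty)
  then show ?thesis
    by (auto simp: SRI_def all_sri_row sri_row_value)
qed

lemma proj_theta_SRI:
  "proj_theta (SRI p d C w b x) =
     {\<theta>. (\<forall>v. 0 \<le> \<theta> v) \<and> (\<exists>y. \<forall>i. sri_rhs d C b x \<theta> i \<le> (\<Sum>j\<in>UNIV. sri_coeff p w i j * y j))}"
    (is "_ = ?R")
proof (intro set_eqI iffI)
  fix \<theta>
  assume "\<theta> \<in> proj_theta (SRI p d C w b x)"
  then obtain y where "(\<theta>, y) \<in> SRI p d C w b x" by (auto simp: proj_theta_def)
  then show "\<theta> \<in> ?R"
    by (auto simp: SRI_iff_sri_system)
next
  fix \<theta>
  assume "\<theta> \<in> ?R"
  then obtain y where "(\<theta>, curry y) \<in> SRI p d C w b x" by (auto simp: SRI_iff_sri_system)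
  then show "\<theta> \<in> proj_theta (SRI p d C w b x)" by (force simp: proj_theta_def)
qed

lemma phi_nonneg: "0 \<le> phi p w v \<alpha> \<beta>"
  by (simp add: phi_def)

lemma phi_le_iff:
  assumes "\<forall>\<xi>. 0 < p \<xi>" and "0 < w v" and "0 \<le> g"
  shows "phi p w v \<alpha> \<beta> \<le> g \<longleftrightarrow> (\<forall>\<xi>. \<beta> \<xi> v + (\<Sum>S\<in>{S. v \<in> S}. \<alpha> \<xi> S) \<le> g * (p \<xi> * w v))"
  using assms by (simp add: phi_def pos_divide_le_eq)

lemma cut_inequality_if_no_farkas_certificate:
  fixes p :: "'s::finite \<Rightarrow> real" and d :: "'s \<Rightarrow> 'c::finite \<Rightarrow> real"
  assumes p_pos: "\<forall>\<xi>. 0 < p \<xi>" and w_nonneg: "\<forall>v. 0 \<le> w v"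
    and no_cert: "no_farkas_certificate (sri_coeff p w) (sri_rhs d C b x \<theta>)"
    and dual: "(\<alpha>, \<beta>) \<in> Aset w"
  shows "(\<Sum>\<xi>\<in>UNIV. \<Sum>S\<in>{S. S \<noteq> {}}. \<alpha> \<xi> S * xE x S) + nu d C b \<alpha> \<beta>
           \<le> (\<Sum>v\<in>{v. 0 < w v}. phi p w v \<alpha> \<beta> * \<theta> v)"
proof -
  define \<gamma> where "\<gamma> v = (if 0 < w v then phi p w v \<alpha> \<beta> else 0)" for v
  define l where "l i = (case i of
      Lower \<xi> v \<Rightarrow> \<gamma> v * (p \<xi> * w v) - (\<beta> \<xi> v + (\<Sum>S\<in>{S. v \<in> S}. \<alpha> \<xi> S))
    | Upper \<xi> v \<Rightarrow> - \<beta> \<xi> v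
    | Capacity \<xi> S \<Rightarrow> (if S = {} then 0 else \<alpha> \<xi> S)
    | Risk v \<Rightarrow> \<gamma> v)" for i
  have coeff_le: "\<beta> \<xi> v + (\<Sum>S\<in>{S. v \<in> S}. \<alpha> \<xi> S) \<le> \<gamma> v * (p \<xi> * w v)" for \<xi> v
  proof (cases "0 < w v")
    case True
    then show ?thesis
      using phi_le_iff[of p w v "phi p w v \<alpha> \<beta>" \<alpha> \<beta>] p_pos True by (simp add: \<gamma>_def phi_nonneg)
  next
    case False
    then have "w v = 0" using w_nonneg[rule_format, of v] by linarith
    with dual show ?thesis by (simp add: Aset_def \<gamma>_def)
  qed
  have l_nonneg: "\<forall>i. 0 \<le> l i"
    using dual coeff_le by (auto simp: all_sri_row l_def \<gamma>_def Aset_def phi_nonneg)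
  have "\<forall>j. (\<Sum>i\<in>UNIV. l i * sri_coeff p w i j) = 0"
  proof
    fix j :: "'s \<times> 'c"
    obtain \<xi> v where j: "j = (\<xi>, v)" by fastforce
    have "(\<Sum>S\<in>{S. v \<in> S}. if S = {} then 0 else \<alpha> \<xi> S) = (\<Sum>S\<in>{S. v \<in> S}. \<alpha> \<xi> S)"
      by (rule sum.cong) auto
    then show "(\<Sum>i\<in>UNIV. l i * sri_coeff p w i j) = 0"
      by (simp add: j sri_column_sum l_def)
  qed
  with no_cert l_nonneg have "(\<Sum>i\<in>UNIV. l i * sri_rhs d C b x \<theta> i) \<le> 0"
    unfolding no_farkas_certificate_def by blast
  moreover have "(\<Sum>v\<in>UNIV. \<gamma> v * \<theta> v) = (\<Sum>v\<in>{v. 0 < w v}. phi p w v \<alpha> \<beta> * \<theta> v)"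
    by (simp add: \<gamma>_def if_distrib[of "\<lambda>t. t * _"] sum.If_cases cong: if_cong)
  moreover have "(\<Sum>S\<in>{S. S \<noteq> {}}. l (Capacity \<xi> S) * sri_rhs d C b x \<theta> (Capacity \<xi> S))
      = (\<Sum>S\<in>{S. S \<noteq> {}}. \<alpha> \<xi> S * sri_rhs d C b x \<theta> (Capacity \<xi> S))" for \<xi>
    by (rule sum.cong) (auto simp: l_def)
  ultimately show ?thesis
    using cut_rhs_eq[of \<alpha> x d C b \<beta> \<theta>] by (simp add: sri_rhs_combination l_def sum_negf)
qed

lemma no_farkas_certificate_if_cut_inequalities:
  fixes p :: "'s::finite \<Rightarrow> real" and d :: "'s \<Rightarrow> 'c::finite \<Rightarrow> real"
  assumes p_pos: "\<forall>\<xi>. 0 < p \<xi>" and cut: "\<theta> \<in> cutset p d C w b x"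
  shows "no_farkas_certificate (sri_coeff p w) (sri_rhs d C b x \<theta>)"
  unfolding no_farkas_certificate_def
proof (intro allI impI)
  fix l :: "('s, 'c) sri_row \<Rightarrow> real"
  assume l_nonneg: "\<forall>i. 0 \<le> l i" and cols: "\<forall>j. (\<Sum>i\<in>UNIV. l i * sri_coeff p w i j) = 0"
  define \<alpha> where "\<alpha> \<xi> S = l (Capacity \<xi> S)" for \<xi> S
  define \<beta> where "\<beta> \<xi> v = - l (Upper \<xi> v)" for \<xi> v
  have coeff_le: "\<beta> \<xi> v + (\<Sum>S\<in>{S. v \<in> S}. \<alpha> \<xi> S) \<le> l (Risk v) * (p \<xi> * w v)" for \<xi> v
  proof -
    have "l (Lower \<xi> v) + (\<beta> \<xi> v + (\<Sum>S\<in>{S. v \<in> S}. \<alpha> \<xi> S)) - l (Risk v) * (p \<xi> * w v) = 0"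
      using cols[rule_format, of "(\<xi>, v)"] by (simp add: sri_column_sum \<alpha>_def \<beta>_def)
    with l_nonneg[rule_format, of "Lower \<xi> v"] show ?thesis by linarith
  qed
  have "(\<alpha>, \<beta>) \<in> Aset w"
    unfolding Aset_def
  proof (simp, intro conjI allI impI)
    show "0 \<le> \<alpha> \<xi> S" and "\<beta> \<xi> v \<le> 0" for \<xi> S v
      using l_nonneg by (simp_all add: \<alpha>_def \<beta>_def)
    show "\<beta> \<xi> v + (\<Sum>S\<in>{S. v \<in> S}. \<alpha> \<xi> S) \<le> 0" if "w v = 0" for \<xi> v
      using coeff_le[of \<xi> v] that by simp
  qed
  with cut have "(\<Sum>\<xi>\<in>UNIV. \<Sum>S\<in>{S. S \<noteq> {}}. \<alpha> \<xi> S * xE x S) + nu d C b \<alpha> \<beta>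
      \<le> (\<Sum>v\<in>{v. 0 < w v}. phi p w v \<alpha> \<beta> * \<theta> v)"
    by (auto simp: cutset_def)
  also have "\<dots> \<le> (\<Sum>v\<in>{v. 0 < w v}. l (Risk v) * \<theta> v)"
  proof (rule sum_mono)
    fix v assume "v \<in> {v. 0 < w v}"
    then have "phi p w v \<alpha> \<beta> \<le> l (Risk v)"
      using phi_le_iff[of p w v "l (Risk v)" \<alpha> \<beta>] p_pos l_nonneg coeff_le by simp
    then show "phi p w v \<alpha> \<beta> * \<theta> v \<le> l (Risk v) * \<theta> v"
      using cut by (simp add: cutset_def mult_right_mono)
  qed
  also have "\<dots> \<le> (\<Sum>v\<in>UNIV. l (Risk v) * \<theta> v)"
    using l_nonneg cut by (intro sum_mono2) (auto simp: cutset_def)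
  finally show "(\<Sum>i\<in>UNIV. l i * sri_rhs d C b x \<theta> i) \<le> 0"
    using cut_rhs_eq[of \<alpha> x d C b \<beta> \<theta>] by (simp add: sri_rhs_combination \<alpha>_def \<beta>_def sum_negf)
qed

lemma cutset_iff_no_farkas_certificate:
  fixes p :: "'s::finite \<Rightarrow> real" and d :: "'s \<Rightarrow> 'c::finite \<Rightarrow> real"
  assumes "\<forall>\<xi>. 0 < p \<xi>" and "\<forall>v. 0 \<le> w v"
  shows "\<theta> \<in> cutset p d C w b x \<longleftrightarrow>
           (\<forall>v. 0 \<le> \<theta> v) \<and> no_farkas_certificate (sri_coeff p w) (sri_rhs d C b x \<theta>)"
proof
  assume "\<theta> \<in> cutset p d C w b x"
  then show "(\<forall>v. 0 \<le> \<theta> v) \<and> no_farkas_certificate (sri_coeff p w) (sri_rhs d C b x \<theta>)"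
    using no_farkas_certificate_if_cut_inequalities[OF assms(1)] by (simp add: cutset_def)
next
  assume "(\<forall>v. 0 \<le> \<theta> v) \<and> no_farkas_certificate (sri_coeff p w) (sri_rhs d C b x \<theta>)"
  then show "\<theta> \<in> cutset p d C w b x"
    using cut_inequality_if_no_farkas_certificate[OF assms] by (auto simp: cutset_def)
qed

lemma proj_theta_SRI_eq_cutset:
  fixes p :: "'s::finite \<Rightarrow> real" and d :: "'s \<Rightarrow> 'c::finite \<Rightarrow> real"
  assumes "\<forall>\<xi>. 0 < p \<xi>" and "\<forall>v. 0 \<le> w v"
  shows "proj_theta (SRI p d C w b x) = cutset p d C w b x"
proof -
  have "proj_theta (SRI p d C w b x) =
      {\<theta>. (\<forall>v. 0 \<le> \<theta> v) \<and> no_farkas_certificate (sri_coeff p w) (sri_rhs d C b x \<theta>)}"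
    by (simp add: proj_theta_SRI farkas_lemma)
  also have "\<dots> = cutset p d C w b x"
    by (simp add: set_eq_iff cutset_iff_no_farkas_certificate[OF assms])
  finally show ?thesis .
qed

theorem proposition3:
  fixes p :: "'s::finite \<Rightarrow> real"
    and d :: "'s \<Rightarrow> 'c::finite \<Rightarrow> real"
    and C :: real
    and w :: "'c \<Rightarrow> real"
    and b :: "'c \<Rightarrow> nat"
    and X :: "('c option set \<Rightarrow> real) set"
  assumes C_pos: "C > 0"
    and d_rat: "\<forall>\<xi> v. d \<xi> v \<in> \<rat>"
    and d_nonneg: "\<forall>\<xi> v. 0 \<le> d \<xi> v"
    and d_le_C: "\<forall>\<xi> v. d \<xi> v \<le> C"
    and p_pos: "\<forall>\<xi>. 0 < p \<xi>"
    and p_sum: "(\<Sum>\<xi>\<in>UNIV. p \<xi>) = 1"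
    and w_rat: "\<forall>v. w v \<in> \<rat>"
    and w_nonneg: "\<forall>v. 0 \<le> w v"
    and X_choice: "X = Xsub \<or> (\<exists>k. X = Xcvrp p d C k)"
  shows "(\<forall>xbar\<in>X. proj_theta (SRI p d C w b xbar) = cutset p d C w b xbar)
         \<and> Pset X p d C w b = {(x, \<theta>). x \<in> X \<and> \<theta> \<in> cutset p d C w b x}"
proof -
  have "proj_theta (SRI p d C w b x) = cutset p d C w b x" for x
    using p_pos w_nonneg by (rule proj_theta_SRI_eq_cutset)
  then show ?thesis
    by (auto simp: Pset_def)
qed

end
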